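(* Let $c_i,\alpha_j\in\mathbb Z$. The Riordan array $$(g,f)=\Bigl(1+\sum_{i\ge1}c_it^i,\ t\bigl(1+\alpha_1t+\alpha_2t^2+\cdots+\alpha_6t^6+O(t^7)\bigr)\Bigr)\in S\mathcal R(\mathbb Z)$$ belongs to $[S\mathcal R(\mathbb Z),S\mathcal R(\mathbb Z)]$ if and only if $c_1=0$, $\alpha_1=\alpha_2=0$, and $\alpha_3\equiv\alpha_4\equiv\alpha_6\pmod 2$. In particular, $$S\mathcal R(\mathbb Z)^{ab}\cong\mathbb Z^3\times(\mathbb Z_2)^2.$$
   Context: $S\mathcal R(\mathbb Z)$ is the group of Riordan arrays $(g,f)$ with $g=1+\sum_{i\ge1}c_it^i$, $f=t+\sum_{k\ge2}f_kt^k$ in $\mathbb Z[[t]]$, identified with lower triangular matrices $(d_{n,k})$, $d_{n,k}=[t^n]gf^k$, with product $(g_1,f_1)(g_2,f_2)=(g_1\cdot(g_2\circ f_1),\,f_2\circ f_1)$. Here $[S\mathcal R(\mathbb Z),S\mathcal R(\mathbb Z)]$ denotes the topological commutator subgroup: the set of limits of finite products of commutators $x^{-1}y^{-1}xy$, in the topology of formal power series ($t$-adic, coefficientwise convergence: a sequence converges if for each $n$ its coefficients of $t^0,\dots,t^n$ in both components eventually agree with those of the limit); $S\mathcal R(\mathbb Z)^{ab}$ is the quotient by this subgroup. $\mathbb Z_2=\mathbb Z/2\mathbb Z$. *)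

theory Defs
  imports "HOL-Algebra.Algebra" "HOL-Computational_Algebra.Formal_Power_Series"
begin

definition SR_carrier :: "(int fps \<times> int fps) set" where
  "SR_carrier = {(g, f). fps_nth g 0 = 1 \<and> fps_nth f 0 = 0 \<and> fps_nth f 1 = 1}"

definition SR_mult :: "int fps \<times> int fps \<Rightarrow> int fps \<times> int fps \<Rightarrow> int fps \<times> int fps" where
  "SR_mult x y = (fst x * (fst y oo snd x), snd y oo snd x)"

definition SR :: "(int fps \<times> int fps) monoid" where
  "SR = \<lparr>carrier = SR_carrier, monoid.mult = SR_mult, one = (1, fps_X)\<rparr>"

definition tadic_conv :: "(nat \<Rightarrow> int fps \<times> int fps) \<Rightarrow> int fps \<times> int fps \<Rightarrow> bool" where
  "tadic_conv s x \<longleftrightarrow>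
     (\<forall>n. \<exists>K. \<forall>k\<ge>K. \<forall>i\<le>n.
        fps_nth (fst (s k)) i = fps_nth (fst x) i \<and> fps_nth (snd (s k)) i = fps_nth (snd x) i)"

definition SR_comm :: "(int fps \<times> int fps) set" where
  "SR_comm = generate SR {inv\<^bsub>SR\<^esub> x \<otimes>\<^bsub>SR\<^esub> inv\<^bsub>SR\<^esub> y \<otimes>\<^bsub>SR\<^esub> x \<otimes>\<^bsub>SR\<^esub> y | x y.
                            x \<in> carrier SR \<and> y \<in> carrier SR}"

definition SR_top_comm :: "(int fps \<times> int fps) set" where
  "SR_top_comm = {x. \<exists>s. (\<forall>k. s k \<in> SR_comm) \<and> tadic_conv s x}"

end

(* The map (g, f) \<mapsto> (g_1, f_2, f_3 - f_2^2, f_4 + f_5 + C(f_3, 2) mod 2, f_5 + f_7 + f_3 f_5 mod 2)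
   is a homomorphism from SR(Z) onto Z^3 x Z_2^2.  It only depends on the coefficients up to t^7,
   so its kernel is closed and contains the closed commutator subgroup.  Conversely, an element of
   the kernel that agrees with the identity up to t^n is corrected at t^(n+1) by a product of
   commutators: the g-coefficient by a commutator of (1 + c t, t) with (1, t + t^(n+1)), the
   f-coefficient by commutators of Lagrange elements (1, t + a t^(p+1)), whose leading coefficient
   (q - p) a b at t^(p+q+1) is that of the bracket of the vector fields a t^(p+1) d/dt and
   b t^(q+1) d/dt.  At odd positions these leading coefficients are even; odd coefficients come
   from higher-order terms, which first reach t^9, and this is why the kernel imposes parity
   conditions on the coefficients of t^5 and t^7 only. *)

theory Submission
  imports Defs
begin

unbundle fps_syntax

section \<open>Series reversion and the group structure\<close>

fun fps_reversion_nth :: "'a::comm_ring_1 fps \<Rightarrow> nat \<Rightarrow> 'a" where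
  "fps_reversion_nth a 0 = 0"
| "fps_reversion_nth a (Suc n) =
     fps_X $ Suc n - (\<Sum>i=0..n. fps_reversion_nth a i * (a ^ i) $ Suc n)"

definition fps_reversion :: "'a::comm_ring_1 fps \<Rightarrow> 'a fps" where
  "fps_reversion a = Abs_fps (fps_reversion_nth a)"

lemma fps_reversion_nth_0 [simp]: "fps_reversion a $ 0 = 0"
  by (simp add: fps_reversion_def)

lemma fps_reversion_nth_1 [simp]: "fps_reversion a $ Suc 0 = 1"
  by (simp add: fps_reversion_def)

lemma fps_reversion_compose:
  fixes a :: "'a::comm_ring_1 fps"
  assumes a0: "a $ 0 = 0" and a1: "a $ 1 = 1"
  shows "fps_reversion a oo a = fps_X"
proof (rule fps_ext)
  fix n
  show "(fps_reversion a oo a) $ n = fps_X $ n"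
  proof (cases n)
    case 0
    then show ?thesis using a0 by (simp add: fps_compose_nth)
  next
    case (Suc m)
    have "(fps_reversion a oo a) $ n =
        (\<Sum>i=0..m. fps_reversion a $ i * (a ^ i) $ n) + fps_reversion a $ Suc m"
      using Suc a1
      by (simp add: fps_compose_nth startsby_zero_power_nth_same[OF a0] del: power_Suc)
    then show ?thesis using Suc by (simp add: fps_reversion_def)
  qed
qed

lemma fps_compose_reversion:
  fixes a :: "'a::idom fps"
  assumes a0: "a $ 0 = 0" and a1: "a $ 1 = 1"
  shows "a oo fps_reversion a = fps_X"
proof -
  let ?b = "fps_reversion a"
  have bb: "fps_reversion ?b oo ?b = fps_X"
    by (rule fps_reversion_compose) simp_all
  have "fps_reversion ?b = fps_reversion ?b oo (?b oo a)"
    by (simp add: fps_reversion_compose[OF a0 a1])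
  also have "\<dots> = (fps_reversion ?b oo ?b) oo a"
    by (rule fps_compose_assoc) (simp_all add: a0)
  also have "\<dots> = a"
    using a0 by (simp add: bb)
  finally show ?thesis using bb by simp
qed

lemma carrier_SR_iff: "x \<in> carrier SR \<longleftrightarrow> fst x $ 0 = 1 \<and> snd x $ 0 = 0 \<and> snd x $ 1 = 1"
  by (cases x) (simp add: SR_def SR_carrier_def)

lemma SR_mult_eq: "x \<otimes>\<^bsub>SR\<^esub> y = (fst x * (fst y oo snd x), snd y oo snd x)"
  by (simp add: SR_def SR_mult_def)

lemma SR_one_eq: "\<one>\<^bsub>SR\<^esub> = (1, fps_X)"
  by (simp add: SR_def)

lemma group_SR: "group SR"
proof (rule groupI)
  fix x y assume "x \<in> carrier SR" "y \<in> carrier SR"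
  then show "x \<otimes>\<^bsub>SR\<^esub> y \<in> carrier SR"
    by (simp add: carrier_SR_iff SR_mult_eq fps_compose_nth)
next
  show "\<one>\<^bsub>SR\<^esub> \<in> carrier SR" by (simp add: carrier_SR_iff SR_one_eq)
next
  fix x y z assume "x \<in> carrier SR" "y \<in> carrier SR" "z \<in> carrier SR"
  then show "x \<otimes>\<^bsub>SR\<^esub> y \<otimes>\<^bsub>SR\<^esub> z = x \<otimes>\<^bsub>SR\<^esub> (y \<otimes>\<^bsub>SR\<^esub> z)"
    by (simp add: SR_mult_eq carrier_SR_iff fps_compose_mult_distrib fps_compose_assoc mult.assoc)
next
  fix x assume "x \<in> carrier SR"
  then show "\<one>\<^bsub>SR\<^esub> \<otimes>\<^bsub>SR\<^esub> x = x" by (simp add: SR_mult_eq SR_one_eq carrier_SR_iff)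
next
  fix x assume x: "x \<in> carrier SR"
  define h where "h = fps_reversion (snd x)"
  have xh: "snd x oo h = fps_X"
    using x unfolding h_def by (intro fps_compose_reversion) (simp_all add: carrier_SR_iff)
  have "(fst x oo h) $ 0 = 1" using x by (simp add: carrier_SR_iff h_def)
  then obtain k where k: "1 = (fst x oo h) * k"
    using fps_is_left_unit_iff_zeroth_is_left_unit[of "fst x oo h"] by auto
  then have "k $ 0 = 1"
    using \<open>(fst x oo h) $ 0 = 1\<close> by (metis fps_mult_nth_0 fps_one_nth mult_1)
  then show "\<exists>y\<in>carrier SR. y \<otimes>\<^bsub>SR\<^esub> x = \<one>\<^bsub>SR\<^esub>"
    by (intro bexI[of _ "(k, h)"])
       (simp_all add: SR_mult_eq SR_one_eq carrier_SR_iff xh k mult.commute, simp add: h_def)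
qed

interpretation SR: group SR
  by (rule group_SR)

section \<open>Agreement up to a given degree\<close>

definition fps_agree :: "nat \<Rightarrow> 'a fps \<Rightarrow> 'a fps \<Rightarrow> bool" where
  "fps_agree n a b \<longleftrightarrow> (\<forall>i\<le>n. a $ i = b $ i)"

definition SR_agree :: "nat \<Rightarrow> 'a fps \<times> 'a fps \<Rightarrow> 'a fps \<times> 'a fps \<Rightarrow> bool" where
  "SR_agree n x y \<longleftrightarrow> fps_agree n (fst x) (fst y) \<and> fps_agree n (snd x) (snd y)"

lemma SR_agree_refl [simp]: "SR_agree n x x"
  by (simp add: SR_agree_def fps_agree_def)

lemma SR_agree_sym: "SR_agree n x y \<Longrightarrow> SR_agree n y x"
  by (simp add: SR_agree_def fps_agree_def)

lemma SR_agree_trans: "SR_agree n x y \<Longrightarrow> SR_agree n y z \<Longrightarrow> SR_agree n x z"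
  by (simp add: SR_agree_def fps_agree_def)

lemma SR_agree_Suc_iff:
  "SR_agree (Suc n) x y \<longleftrightarrow>
     SR_agree n x y \<and> fst x $ Suc n = fst y $ Suc n \<and> snd x $ Suc n = snd y $ Suc n"
  by (auto simp: SR_agree_def fps_agree_def le_Suc_eq)

lemma fps_agree_mult:
  fixes a b :: "'a::semiring_0 fps"
  shows "fps_agree n a a' \<Longrightarrow> fps_agree n b b' \<Longrightarrow> fps_agree n (a * b) (a' * b')"
  unfolding fps_agree_def fps_mult_nth by (auto intro!: sum.cong)

lemma fps_agree_power:
  fixes b :: "'a::semiring_1 fps"
  assumes "fps_agree n b b'"
  shows "fps_agree n (b ^ k) (b' ^ k)"
proof (induction k)
  case 0
  then show ?case by (simp add: fps_agree_def)
next
  case (Suc k)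
  then show ?case using assms by (simp add: fps_agree_mult)
qed

lemma fps_agree_compose:
  fixes a b :: "'a::semiring_1 fps"
  assumes "fps_agree n a a'" and "fps_agree n b b'"
  shows "fps_agree n (a oo b) (a' oo b')"
  using assms fps_agree_power[OF assms(2)]
  unfolding fps_agree_def fps_compose_nth by (auto intro!: sum.cong)

lemma SR_agree_mult:
  "SR_agree n x x' \<Longrightarrow> SR_agree n y y' \<Longrightarrow> SR_agree n (x \<otimes>\<^bsub>SR\<^esub> y) (x' \<otimes>\<^bsub>SR\<^esub> y')"
  by (simp add: SR_agree_def SR_mult_eq fps_agree_mult fps_agree_compose)

lemma SR_agree_cancel:
  assumes "p \<in> carrier SR" "r \<in> carrier SR" "p \<otimes>\<^bsub>SR\<^esub> r = q" "SR_agree n p q"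
  shows "SR_agree n r \<one>\<^bsub>SR\<^esub>"
proof -
  have "q \<in> carrier SR"
    using assms(1-3) SR.m_closed by blast
  then have "r = inv\<^bsub>SR\<^esub> p \<otimes>\<^bsub>SR\<^esub> q"
    using SR.inv_solve_left[OF assms(2,1)] assms(3) by simp
  moreover have "SR_agree n (inv\<^bsub>SR\<^esub> p \<otimes>\<^bsub>SR\<^esub> q) (inv\<^bsub>SR\<^esub> p \<otimes>\<^bsub>SR\<^esub> p)"
    using SR_agree_sym[OF assms(4)] by (intro SR_agree_mult SR_agree_refl)
  ultimately show ?thesis using assms(1) by simp
qed

definition SR_commutator :: "int fps \<times> int fps \<Rightarrow> int fps \<times> int fps \<Rightarrow> int fps \<times> int fps" where
  "SR_commutator x y = inv\<^bsub>SR\<^esub> x \<otimes>\<^bsub>SR\<^esub> inv\<^bsub>SR\<^esub> y \<otimes>\<^bsub>SR\<^esub> x \<otimes>\<^bsub>SR\<^esub> y"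

lemma SR_commutator_in_SR_comm:
  "x \<in> carrier SR \<Longrightarrow> y \<in> carrier SR \<Longrightarrow> SR_commutator x y \<in> SR_comm"
  unfolding SR_comm_def SR_commutator_def by (rule generate.incl) blast

lemma SR_commutator_closed [simp]:
  "x \<in> carrier SR \<Longrightarrow> y \<in> carrier SR \<Longrightarrow> SR_commutator x y \<in> carrier SR"
  by (simp add: SR_commutator_def)

lemma SR_mult_commutator:
  assumes "x \<in> carrier SR" "y \<in> carrier SR"
  shows "y \<otimes>\<^bsub>SR\<^esub> x \<otimes>\<^bsub>SR\<^esub> SR_commutator x y = x \<otimes>\<^bsub>SR\<^esub> y"
proof -
  have "y \<otimes>\<^bsub>SR\<^esub> x \<otimes>\<^bsub>SR\<^esub> SR_commutator x y
      = y \<otimes>\<^bsub>SR\<^esub> (x \<otimes>\<^bsub>SR\<^esub> inv\<^bsub>SR\<^esub> x) \<otimes>\<^bsub>SR\<^esub> inv\<^bsub>SR\<^esub> y \<otimes>\<^bsub>SR\<^esub> x \<otimes>\<^bsub>SR\<^esub> y"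
    using assms unfolding SR_commutator_def by (simp only: SR.m_assoc SR.inv_closed SR.m_closed)
  also have "\<dots> = x \<otimes>\<^bsub>SR\<^esub> y"
    using assms by (simp flip: SR.m_assoc)
  finally show ?thesis .
qed

lemma SR_comm_eq_derived: "SR_comm = derived SR (carrier SR)"
proof -
  have "{inv\<^bsub>SR\<^esub> x \<otimes>\<^bsub>SR\<^esub> inv\<^bsub>SR\<^esub> y \<otimes>\<^bsub>SR\<^esub> x \<otimes>\<^bsub>SR\<^esub> y | x y. x \<in> carrier SR \<and> y \<in> carrier SR}
      = derived_set SR (carrier SR)"
  proof (intro equalityI subsetI)
    fix c assume "c \<in> {inv\<^bsub>SR\<^esub> x \<otimes>\<^bsub>SR\<^esub> inv\<^bsub>SR\<^esub> y \<otimes>\<^bsub>SR\<^esub> x \<otimes>\<^bsub>SR\<^esub> y | x y. x \<in> carrier SR \<and> y \<in> carrier SR}"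
    then obtain x y where "x \<in> carrier SR" "y \<in> carrier SR"
      "c = inv\<^bsub>SR\<^esub> x \<otimes>\<^bsub>SR\<^esub> inv\<^bsub>SR\<^esub> y \<otimes>\<^bsub>SR\<^esub> inv\<^bsub>SR\<^esub> (inv\<^bsub>SR\<^esub> x) \<otimes>\<^bsub>SR\<^esub> inv\<^bsub>SR\<^esub> (inv\<^bsub>SR\<^esub> y)"
      by auto
    then show "c \<in> derived_set SR (carrier SR)" by blast
  next
    fix c assume "c \<in> derived_set SR (carrier SR)"
    then obtain x y where "x \<in> carrier SR" "y \<in> carrier SR"
      "c = inv\<^bsub>SR\<^esub> (inv\<^bsub>SR\<^esub> x) \<otimes>\<^bsub>SR\<^esub> inv\<^bsub>SR\<^esub> (inv\<^bsub>SR\<^esub> y) \<otimes>\<^bsub>SR\<^esub> inv\<^bsub>SR\<^esub> x \<otimes>\<^bsub>SR\<^esub> inv\<^bsub>SR\<^esub> y"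
      by auto
    then show "c \<in> {inv\<^bsub>SR\<^esub> x \<otimes>\<^bsub>SR\<^esub> inv\<^bsub>SR\<^esub> y \<otimes>\<^bsub>SR\<^esub> x \<otimes>\<^bsub>SR\<^esub> y | x y. x \<in> carrier SR \<and> y \<in> carrier SR}"
      by blast
  qed
  then show ?thesis by (simp add: SR_comm_def derived_def)
qed

lemma SR_comm_subgroup: "subgroup SR_comm SR"
  by (simp add: SR_comm_eq_derived SR.derived_is_subgroup)

lemma (in group_hom) derived_subset_kernel:
  assumes "comm_group H"
  shows "derived G (carrier G) \<subseteq> kernel G H h"
proof -
  have "h ` carrier G \<subseteq> carrier H"
    by auto
  then have "h ` derived G (carrier G) = {\<one>\<^bsub>H\<^esub>}"
    using derived_img[of "carrier G"] comm_group.derived_eq_singleton[OF assms] by simp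
  then show ?thesis
    using G.derived_in_carrier[of "carrier G"] by (auto simp: kernel_def)
qed

section \<open>Coefficients of products near the identity\<close>

lemma fps_power_nth_add:
  fixes F :: "'a::comm_ring_1 fps"
  assumes "F $ 0 = 0"
  shows "(F ^ i) $ (i + k) = (fps_shift 1 F ^ i) $ k"
proof -
  have "F = fps_X * fps_shift 1 F"
    using assms by (intro fps_ext) (simp add: fps_X_power_mult_nth[of 1, simplified])
  then have "F ^ i = fps_X ^ i * fps_shift 1 F ^ i"
    by (metis power_mult_distrib)
  then show ?thesis by (simp add: fps_X_power_mult_nth)
qed

lemma fps_power_nth_0_unit:
  fixes H :: "'a::comm_ring_1 fps"
  shows "H $ 0 = 1 \<Longrightarrow> (H ^ i) $ 0 = 1"
  by (induction i) simp_all

lemma fps_power_nth_1_unit: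
  fixes H :: "'a::comm_ring_1 fps"
  assumes "H $ 0 = 1"
  shows "(H ^ i) $ 1 = of_nat i * H $ 1"
proof (induction i)
  case (Suc i)
  then show ?case
    using assms by (simp add: fps_mult_nth fps_power_nth_0_unit algebra_simps)
qed simp

lemma fps_power_nth_2_unit:
  fixes H :: "'a::comm_ring_1 fps"
  assumes "H $ 0 = 1"
  shows "(H ^ i) $ 2 = of_nat i * H $ 2 + of_nat (i choose 2) * (H $ 1)\<^sup>2"
proof (induction i)
  case (Suc i)
  have "(H ^ Suc i) $ 2 = H $ 0 * (H ^ i) $ 2 + H $ 1 * (H ^ i) $ 1 + H $ 2 * (H ^ i) $ 0"
    by (simp add: fps_mult_nth numeral_2_eq_2)
  also have "\<dots> = of_nat (Suc i) * H $ 2 + of_nat (Suc i choose 2) * (H $ 1)\<^sup>2"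
  proof -
    have "Suc i choose 2 = i + (i choose 2)"
      by (simp add: numeral_2_eq_2)
    then show ?thesis
      using Suc assms fps_power_nth_1_unit[OF assms, of i]
      by (simp add: fps_power_nth_0_unit power2_eq_square algebra_simps)
  qed
  finally show ?case .
qed (simp add: numeral_2_eq_2)

lemma fps_power_nth_Suc_self:
  fixes F :: "'a::comm_ring_1 fps"
  assumes "F $ 0 = 0" "F $ 1 = 1"
  shows "(F ^ i) $ (i + 1) = of_nat i * F $ 2"
  using assms fps_power_nth_add[of F i 1] fps_power_nth_1_unit[of "fps_shift 1 F" i]
  by (simp add: numeral_2_eq_2)

lemma fps_power_nth_Suc_Suc_self:
  fixes F :: "'a::comm_ring_1 fps"
  assumes "F $ 0 = 0" "F $ 1 = 1"
  shows "(F ^ i) $ (i + 2) = of_nat i * F $ 3 + of_nat (i choose 2) * (F $ 2)\<^sup>2"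
  using assms fps_power_nth_add[of F i 2] fps_power_nth_2_unit[of "fps_shift 1 F" i]
  by (simp add: numeral_eq_Suc)

lemma fps_compose_nth_from:
  assumes "\<And>i. i < D \<Longrightarrow> U $ i = 0"
  shows "(U oo F) $ k = (\<Sum>i=D..k. U $ i * (F ^ i) $ k)"
  unfolding fps_compose_nth by (rule sum.mono_neutral_right) (auto simp: assms)

lemma fps_compose_near_X_nth:
  fixes F R :: "'a::comm_ring_1 fps"
  assumes F0: "F $ 0 = 0" and F1: "F $ 1 = 1" and R: "fps_agree n R fps_X" and n: "n \<ge> 1"
  shows "k \<le> n \<Longrightarrow> (R oo F) $ k = F $ k"
    and "(R oo F) $ (n+1) = F $ (n+1) + R $ (n+1)"
    and "(R oo F) $ (n+2) = F $ (n+2) + R $ (n+2) + of_nat (n+1) * F $ 2 * R $ (n+1)"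
    and "(R oo F) $ (n+3) = F $ (n+3) + R $ (n+3) + of_nat (n+2) * F $ 2 * R $ (n+2)
           + (of_nat (n+1) * F $ 3 + of_nat ((n+1) choose 2) * (F $ 2)\<^sup>2) * R $ (n+1)"
proof -
  define U where "U = R - fps_X"
  have U_low: "U $ i = 0" if "i < n + 1" for i
    using R that by (simp add: U_def fps_agree_def)
  have U_high: "U $ i = R $ i" if "i > n" for i
    using that n by (simp add: U_def)
  have RF: "(R oo F) $ k = F $ k + (\<Sum>i=n+1..k. U $ i * (F ^ i) $ k)" for k
    using fps_compose_nth_from[of "n+1" U F k, OF U_low]
    by (simp add: U_def fps_compose_sub_distrib F0 diff_eq_eq add.commute)
  have diag: "(F ^ i) $ i = 1" for i
    using F0 F1 by (simp add: startsby_zero_power_nth_same)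
  note sub1 = fps_power_nth_Suc_self[OF F0 F1] and sub2 = fps_power_nth_Suc_Suc_self[OF F0 F1]
  show "k \<le> n \<Longrightarrow> (R oo F) $ k = F $ k"
    by (simp add: RF)
  show "(R oo F) $ (n+1) = F $ (n+1) + R $ (n+1)"
    by (simp add: RF U_high diag del: power_Suc)
  have "{n+1..n+2} = {n+1, n+2}" "{n+1..n+3} = {n+1, n+2, n+3}"
    by auto
  moreover have e: "n + 1 + 2 = n + 3" "n + 2 + 1 = n + 3" "n + 1 + 1 = n + 2"
    by simp_all
  moreover have "(F ^ (n+1)) $ (n+3) = of_nat (n+1) * F $ 3 + of_nat ((n+1) choose 2) * (F $ 2)\<^sup>2"
    and "(F ^ (n+2)) $ (n+3) = of_nat (n+2) * F $ 2" "(F ^ (n+1)) $ (n+2) = of_nat (n+1) * F $ 2"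
    using sub2[of "n+1", unfolded e] sub1[of "n+2", unfolded e] sub1[of "n+1", unfolded e]
    by simp_all
  ultimately show "(R oo F) $ (n+2) = F $ (n+2) + R $ (n+2) + of_nat (n+1) * F $ 2 * R $ (n+1)"
    and "(R oo F) $ (n+3) = F $ (n+3) + R $ (n+3) + of_nat (n+2) * F $ 2 * R $ (n+2)
           + (of_nat (n+1) * F $ 3 + of_nat ((n+1) choose 2) * (F $ 2)\<^sup>2) * R $ (n+1)"
    by (simp_all add: RF U_high diag algebra_simps del: power_Suc)
qed

lemma fps_mult_compose_near_1_nth:
  fixes F G H :: "'a::comm_ring_1 fps"
  assumes F0: "F $ 0 = 0" and F1: "F $ 1 = 1" and H: "fps_agree n H 1"
  shows "k \<le> n \<Longrightarrow> (G * (H oo F)) $ k = G $ k"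
    and "G $ 0 = 1 \<Longrightarrow> (G * (H oo F)) $ (n+1) = G $ (n+1) + H $ (n+1)"
proof -
  define V where "V = H - 1"
  have VF: "(V oo F) $ k = (\<Sum>i=n+1..k. V $ i * (F ^ i) $ k)" for k
    using H by (intro fps_compose_nth_from) (simp add: V_def fps_agree_def)
  have VF_low: "(V oo F) $ k = 0" if "k \<le> n" for k
    using that by (simp add: VF)
  have HF: "G * (H oo F) = G + G * (V oo F)"
    by (simp add: V_def fps_compose_sub_distrib right_diff_distrib)
  have GVF: "(G * (V oo F)) $ k = (\<Sum>j=0..k. G $ j * (V oo F) $ (k - j))" for k
    by (simp add: fps_mult_nth)
  show "k \<le> n \<Longrightarrow> (G * (H oo F)) $ k = G $ k"
    by (simp add: HF GVF VF_low)
  assume G0: "G $ 0 = 1"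
  have "(G * (V oo F)) $ (n+1) = (\<Sum>j\<in>{0}. G $ j * (V oo F) $ (n + 1 - j))"
    unfolding GVF
  proof (rule sum.mono_neutral_right)
    show "\<forall>i\<in>{0..n+1} - {0}. G $ i * (V oo F) $ (n + 1 - i) = 0"
    proof
      fix i assume "i \<in> {0..n+1} - {0}"
      then have "n + 1 - i \<le> n" by auto
      then show "G $ i * (V oo F) $ (n + 1 - i) = 0" by (simp add: VF_low)
    qed
  qed simp_all
  also have "\<dots> = V $ (n+1)"
    using G0 F0 F1 by (simp add: VF startsby_zero_power_nth_same del: power_Suc)
  finally show "(G * (H oo F)) $ (n+1) = G $ (n+1) + H $ (n+1)"
    by (simp add: HF V_def)
qed

lemma SR_mult_near_one_nth:
  assumes p: "p \<in> carrier SR" and r: "r \<in> carrier SR"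
    and r1: "SR_agree n r \<one>\<^bsub>SR\<^esub>" and n: "n \<ge> 1"
  shows "SR_agree n (p \<otimes>\<^bsub>SR\<^esub> r) p"
    and "fst (p \<otimes>\<^bsub>SR\<^esub> r) $ (n+1) = fst p $ (n+1) + fst r $ (n+1)"
    and "snd (p \<otimes>\<^bsub>SR\<^esub> r) $ (n+1) = snd p $ (n+1) + snd r $ (n+1)"
    and "snd (p \<otimes>\<^bsub>SR\<^esub> r) $ (n+2) =
           snd p $ (n+2) + snd r $ (n+2) + of_nat (n+1) * snd p $ 2 * snd r $ (n+1)"
    and "snd (p \<otimes>\<^bsub>SR\<^esub> r) $ (n+3) =
           snd p $ (n+3) + snd r $ (n+3) + of_nat (n+2) * snd p $ 2 * snd r $ (n+2)
           + (of_nat (n+1) * snd p $ 3 + of_nat ((n+1) choose 2) * (snd p $ 2)\<^sup>2) * snd r $ (n+1)"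
proof -
  have F0: "snd p $ 0 = 0" and F1: "snd p $ 1 = 1" and G0: "fst p $ 0 = 1"
    using p by (auto simp: carrier_SR_iff)
  have "fps_agree n (snd r) fps_X" "fps_agree n (fst r) 1"
    using r1 by (simp_all add: SR_agree_def SR_one_eq)
  note f = fps_compose_near_X_nth[OF F0 F1 this(1) n]
    and g = fps_mult_compose_near_1_nth[OF F0 F1 this(2)]
  show "SR_agree n (p \<otimes>\<^bsub>SR\<^esub> r) p"
    by (simp add: SR_agree_def fps_agree_def SR_mult_eq f(1) g(1))
  show "fst (p \<otimes>\<^bsub>SR\<^esub> r) $ (n+1) = fst p $ (n+1) + fst r $ (n+1)"
    unfolding SR_mult_eq fst_conv by (rule g(2)[OF G0])
  show "snd (p \<otimes>\<^bsub>SR\<^esub> r) $ (n+1) = snd p $ (n+1) + snd r $ (n+1)"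
    and "snd (p \<otimes>\<^bsub>SR\<^esub> r) $ (n+2) =
           snd p $ (n+2) + snd r $ (n+2) + of_nat (n+1) * snd p $ 2 * snd r $ (n+1)"
    and "snd (p \<otimes>\<^bsub>SR\<^esub> r) $ (n+3) =
           snd p $ (n+3) + snd r $ (n+3) + of_nat (n+2) * snd p $ 2 * snd r $ (n+2)
           + (of_nat (n+1) * snd p $ 3 + of_nat ((n+1) choose 2) * (snd p $ 2)\<^sup>2) * snd r $ (n+1)"
    by (simp_all only: SR_mult_eq snd_conv f(2-4))
qed

lemma SR_commutator_nth:
  assumes x: "x \<in> carrier SR" and y: "y \<in> carrier SR"
    and xy: "SR_agree n (y \<otimes>\<^bsub>SR\<^esub> x) (x \<otimes>\<^bsub>SR\<^esub> y)" and n: "n \<ge> 1"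
  defines "p \<equiv> y \<otimes>\<^bsub>SR\<^esub> x" and "q \<equiv> x \<otimes>\<^bsub>SR\<^esub> y" and "r \<equiv> SR_commutator x y"
  shows "SR_agree n r \<one>\<^bsub>SR\<^esub>"
    and "fst r $ (n+1) = fst q $ (n+1) - fst p $ (n+1)"
    and "snd r $ (n+1) = snd q $ (n+1) - snd p $ (n+1)"
    and "snd r $ (n+2) = snd q $ (n+2) - snd p $ (n+2) - of_nat (n+1) * snd p $ 2 * snd r $ (n+1)"
    and "snd r $ (n+3) = snd q $ (n+3) - snd p $ (n+3) - of_nat (n+2) * snd p $ 2 * snd r $ (n+2)
           - (of_nat (n+1) * snd p $ 3 + of_nat ((n+1) choose 2) * (snd p $ 2)\<^sup>2) * snd r $ (n+1)"
proof -
  have pr: "p \<otimes>\<^bsub>SR\<^esub> r = q"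
    using x y by (simp add: p_def q_def r_def SR_mult_commutator)
  have p: "p \<in> carrier SR" and r: "r \<in> carrier SR"
    using x y by (simp_all add: p_def r_def)
  show r1: "SR_agree n r \<one>\<^bsub>SR\<^esub>"
    using SR_agree_cancel[OF p r pr] xy by (simp add: p_def q_def)
  note M = SR_mult_near_one_nth[OF p r r1 n, unfolded pr]
  show "fst r $ (n+1) = fst q $ (n+1) - fst p $ (n+1)"
    and "snd r $ (n+1) = snd q $ (n+1) - snd p $ (n+1)"
    and "snd r $ (n+2) = snd q $ (n+2) - snd p $ (n+2) - of_nat (n+1) * snd p $ 2 * snd r $ (n+1)"
    and "snd r $ (n+3) = snd q $ (n+3) - snd p $ (n+3) - of_nat (n+2) * snd p $ 2 * snd r $ (n+2)
           - (of_nat (n+1) * snd p $ 3 + of_nat ((n+1) choose 2) * (snd p $ 2)\<^sup>2) * snd r $ (n+1)"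
    using M(2-5) by simp_all
qed

section \<open>Commutators of Lagrange elements\<close>

definition SR_lagrange :: "nat \<Rightarrow> int \<Rightarrow> int fps \<times> int fps" where
  "SR_lagrange p a = (1, fps_X + fps_const a * fps_X ^ (p+1))"

definition SR_appell :: "int \<Rightarrow> int fps \<times> int fps" where
  "SR_appell c = (1 + fps_const c * fps_X, fps_X)"

lemma SR_lagrange_closed [simp]: "p \<ge> 1 \<Longrightarrow> SR_lagrange p a \<in> carrier SR"
  by (simp add: SR_lagrange_def carrier_SR_iff)

lemma SR_appell_closed [simp]: "SR_appell c \<in> carrier SR"
  by (simp add: SR_appell_def carrier_SR_iff)

lemma fps_binomial_monomial_nth:
  fixes a :: "'a::comm_ring_1"
  assumes "p \<ge> 1"
  shows "((1 + fps_const a * fps_X ^ p) ^ k) $ j =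
           (if p dvd j then of_nat (k choose (j div p)) * a ^ (j div p) else 0)"
proof -
  have "(1 + fps_const a * fps_X ^ p) ^ k =
      (\<Sum>i\<le>k. of_nat (k choose i) * (fps_const a * fps_X ^ p) ^ i)"
    using binomial_ring[of "fps_const a * fps_X ^ p" 1 k] by (simp add: add.commute)
  also have "\<dots> = (\<Sum>i\<le>k. fps_const (of_nat (k choose i) * a ^ i) * fps_X ^ (p * i))"
    by (simp add: power_mult_distrib fps_const_power power_mult fps_of_nat mult.assoc
        flip: fps_const_mult)
  finally have "(1 + fps_const a * fps_X ^ p) ^ k =
      (\<Sum>i\<le>k. fps_const (of_nat (k choose i) * a ^ i) * fps_X ^ (p * i))" .
  then have "((1 + fps_const a * fps_X ^ p) ^ k) $ j =
      (\<Sum>i\<le>k. if j = p * i then of_nat (k choose i) * a ^ i else 0)"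
    by (auto simp: fps_sum_nth intro!: sum.cong)
  also have "\<dots> = (if p dvd j then of_nat (k choose (j div p)) * a ^ (j div p) else 0)"
  proof (cases "p dvd j")
    case True
    then have "(\<Sum>i\<le>k. if j = p * i then of_nat (k choose i) * a ^ i else 0) =
        (\<Sum>i\<le>k. if i = j div p then of_nat (k choose i) * a ^ i else (0::'a))"
      using assms by (intro sum.cong) auto
    then show ?thesis using True by (simp add: binomial_eq_0)
  qed (auto intro!: sum.neutral)
  finally show ?thesis .
qed

lemma SR_lagrange_power_nth:
  fixes a :: int
  assumes "p \<ge> 1"
  shows "((fps_X + fps_const a * fps_X ^ (p+1)) ^ k) $ n =
     (if k \<le> n \<and> p dvd (n - k) then of_nat (k choose ((n - k) div p)) * a ^ ((n - k) div p) else 0)"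
proof -
  have "(fps_X + fps_const a * fps_X ^ (p+1)) ^ k = fps_X ^ k * (1 + fps_const a * fps_X ^ p) ^ k"
    by (simp add: algebra_simps flip: power_mult_distrib)
  then show ?thesis
    by (simp add: fps_X_power_mult_nth fps_binomial_monomial_nth[OF assms])
qed

lemma fst_SR_lagrange_mult [simp]: "fst (SR_lagrange p a \<otimes>\<^bsub>SR\<^esub> SR_lagrange q b) = 1"
  by (simp add: SR_lagrange_def SR_mult_eq)

lemma snd_SR_lagrange_mult_nth:
  assumes "p \<ge> 1"
  shows "snd (SR_lagrange p a \<otimes>\<^bsub>SR\<^esub> SR_lagrange q b) $ n =
     of_bool (n = 1) + a * of_bool (n = p + 1) +
     b * (if q + 1 \<le> n \<and> p dvd (n - (q+1))
          then of_nat ((q+1) choose ((n - (q+1)) div p)) * a ^ ((n - (q+1)) div p) else 0)"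
proof -
  let ?F = "fps_X + fps_const a * fps_X ^ (p+1)"
  have F0: "?F $ 0 = 0"
    by simp
  have "(fps_X + fps_const b * fps_X ^ (q+1)) oo ?F = (fps_X oo ?F) + (fps_const b oo ?F) * (fps_X ^ (q+1) oo ?F)"
    by (simp only: fps_compose_add_distrib fps_compose_mult_distrib[OF F0])
  also have "\<dots> = ?F + fps_const b * ?F ^ (q+1)"
    by (simp only: fps_compose_power[OF F0, symmetric] fps_X_fps_compose_startby0[OF F0]
        fps_const_compose)
  finally have "snd (SR_lagrange p a \<otimes>\<^bsub>SR\<^esub> SR_lagrange q b) = ?F + fps_const b * ?F ^ (q+1)"
    by (simp add: SR_lagrange_def SR_mult_eq)
  moreover have "?F $ n = of_bool (n = 1) + a * of_bool (n = p + 1)"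
    by (simp only: fps_add_nth fps_mult_left_const_nth fps_X_nth fps_X_power_nth) simp
  ultimately show ?thesis
    by (simp only: fps_add_nth fps_mult_left_const_nth SR_lagrange_power_nth[OF assms])
qed

lemma SR_lagrange_subgroup: "subgroup {x \<in> carrier SR. fst x = 1} SR"
proof (rule SR.subgroupI)
  show "{x \<in> carrier SR. fst x = 1} \<noteq> {}"
    using SR.one_closed by (auto simp: SR_one_eq)
next
  fix x assume x: "x \<in> {x \<in> carrier SR. fst x = 1}"
  then have "fst (inv\<^bsub>SR\<^esub> x \<otimes>\<^bsub>SR\<^esub> x) = fst (inv\<^bsub>SR\<^esub> x)"
    by (simp add: SR_mult_eq)
  then show "inv\<^bsub>SR\<^esub> x \<in> {x \<in> carrier SR. fst x = 1}"
    using x by (simp add: SR_one_eq)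
next
  fix x y assume xy: "x \<in> {x \<in> carrier SR. fst x = 1}" "y \<in> {x \<in> carrier SR. fst x = 1}"
  then have "fst (x \<otimes>\<^bsub>SR\<^esub> y) = 1"
    by (simp add: SR_mult_eq)
  then show "x \<otimes>\<^bsub>SR\<^esub> y \<in> {x \<in> carrier SR. fst x = 1}"
    using xy by simp
qed auto

definition lagrange_comm :: "nat \<Rightarrow> int fps \<times> int fps \<Rightarrow> bool" where
  "lagrange_comm n w \<longleftrightarrow> w \<in> SR_comm \<and> fst w = 1 \<and> SR_agree n w \<one>\<^bsub>SR\<^esub>"

lemma lagrange_comm_carrier: "lagrange_comm n w \<Longrightarrow> w \<in> carrier SR"
  using SR_comm_subgroup by (auto simp: lagrange_comm_def dest: subgroup.mem_carrier)

lemma lagrange_comm_one: "lagrange_comm n \<one>\<^bsub>SR\<^esub>"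
  using subgroup.one_closed[OF SR_comm_subgroup] by (simp add: lagrange_comm_def SR_one_eq)

lemma lagrange_comm_commutator:
  assumes "x \<in> carrier SR" "y \<in> carrier SR" "fst x = 1" "fst y = 1"
    and "SR_agree n (SR_commutator x y) \<one>\<^bsub>SR\<^esub>"
  shows "lagrange_comm n (SR_commutator x y)"
proof -
  have "SR_commutator x y \<in> {x \<in> carrier SR. fst x = 1}"
    unfolding SR_commutator_def using assms
    by (intro subgroup.m_closed[OF SR_lagrange_subgroup] subgroup.m_inv_closed[OF SR_lagrange_subgroup])
       auto
  then show ?thesis
    using assms by (simp add: lagrange_comm_def SR_commutator_in_SR_comm)
qed

lemma lagrange_comm_Suc:
  "n \<ge> 1 \<Longrightarrow> lagrange_comm n w \<Longrightarrow> snd w $ (n+1) = 0 \<Longrightarrow> lagrange_comm (n+1) w"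
  by (simp add: lagrange_comm_def SR_agree_Suc_iff SR_one_eq)

lemma lagrange_comm_mult_nth:
  assumes u: "lagrange_comm n u" and v: "lagrange_comm n v" and n: "n \<ge> 3"
  shows "lagrange_comm n (u \<otimes>\<^bsub>SR\<^esub> v)"
    and "n < k \<Longrightarrow> k \<le> n + 3 \<Longrightarrow> snd (u \<otimes>\<^bsub>SR\<^esub> v) $ k = snd u $ k + snd v $ k"
proof -
  have uc: "u \<in> carrier SR" and vc: "v \<in> carrier SR"
    using u v by (simp_all add: lagrange_comm_carrier)
  have v1: "SR_agree n v \<one>\<^bsub>SR\<^esub>"
    using v by (simp add: lagrange_comm_def)
  note M = SR_mult_near_one_nth[OF uc vc v1]
  have "u \<otimes>\<^bsub>SR\<^esub> v \<in> SR_comm"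
    using u v subgroup.m_closed[OF SR_comm_subgroup] by (simp add: lagrange_comm_def)
  moreover have "SR_agree n (u \<otimes>\<^bsub>SR\<^esub> v) \<one>\<^bsub>SR\<^esub>"
    using SR_agree_trans[OF M(1)] u n by (simp add: lagrange_comm_def)
  ultimately show "lagrange_comm n (u \<otimes>\<^bsub>SR\<^esub> v)"
    using u v by (simp add: lagrange_comm_def SR_mult_eq)
  have "snd u $ 2 = 0" "snd u $ 3 = 0"
    using u n by (auto simp: lagrange_comm_def SR_agree_def fps_agree_def SR_one_eq)
  then have "snd (u \<otimes>\<^bsub>SR\<^esub> v) $ (n+j) = snd u $ (n+j) + snd v $ (n+j)" if "j \<in> {1,2,3}" for j
    using that n M(3-5) by auto
  moreover assume "n < k" "k \<le> n + 3"
  then have "k - n \<in> {1,2,3}" "k = n + (k - n)"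
    by auto
  ultimately show "snd (u \<otimes>\<^bsub>SR\<^esub> v) $ k = snd u $ k + snd v $ k"
    by metis
qed

lemma nat_dvd_less_iff: "m < (p::nat) \<Longrightarrow> p dvd m \<longleftrightarrow> m = 0"
  using nat_dvd_not_less by auto

context
  fixes p q :: nat and c :: int
  assumes p: "1 \<le> p" and pq: "p < q"
begin

lemma snd_SR_lagrange_pq_nth:
  "snd (SR_lagrange p 1 \<otimes>\<^bsub>SR\<^esub> SR_lagrange q c) $ n = of_bool (n = 1) + of_bool (n = p+1) +
     c * (if q+1 \<le> n \<and> p dvd (n - (q+1)) then int ((q+1) choose ((n - (q+1)) div p)) else 0)"
  using snd_SR_lagrange_mult_nth[OF p, of 1 q c n] by simp

lemma snd_SR_lagrange_qp_nth:
  "snd (SR_lagrange q c \<otimes>\<^bsub>SR\<^esub> SR_lagrange p 1) $ n = of_bool (n = 1) + c * of_bool (n = q+1) +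
     (if p+1 \<le> n \<and> q dvd (n - (p+1))
      then int ((p+1) choose ((n - (p+1)) div q)) * c ^ ((n - (p+1)) div q) else 0)"
  using snd_SR_lagrange_mult_nth[of q c p 1 n] p pq by simp

lemma SR_lagrange_mult_agree:
  "SR_agree (p+q) (SR_lagrange q c \<otimes>\<^bsub>SR\<^esub> SR_lagrange p 1) (SR_lagrange p 1 \<otimes>\<^bsub>SR\<^esub> SR_lagrange q c)"
proof -
  have "q+1 \<le> n \<and> p dvd (n - (q+1)) \<longleftrightarrow> n = q+1" "p+1 \<le> n \<and> q dvd (n - (p+1)) \<longleftrightarrow> n = p+1"
    if "n \<le> p + q" for n
    using that p pq nat_dvd_less_iff[of "n - (q+1)" p] nat_dvd_less_iff[of "n - (p+1)" q] by auto
  then show ?thesis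
    using pq by (simp add: SR_agree_def fps_agree_def snd_SR_lagrange_pq_nth snd_SR_lagrange_qp_nth)
qed

lemma SR_commutator_lagrange_nth:
  defines "x \<equiv> SR_lagrange p 1" and "y \<equiv> SR_lagrange q c"
  shows "SR_agree (p+q) (SR_commutator x y) \<one>\<^bsub>SR\<^esub>"
    and "snd (SR_commutator x y) $ (p+q+1) = snd (x \<otimes>\<^bsub>SR\<^esub> y) $ (p+q+1) - snd (y \<otimes>\<^bsub>SR\<^esub> x) $ (p+q+1)"
    and "snd (SR_commutator x y) $ (p+q+2) = snd (x \<otimes>\<^bsub>SR\<^esub> y) $ (p+q+2) - snd (y \<otimes>\<^bsub>SR\<^esub> x) $ (p+q+2)
           - of_nat (p+q+1) * of_bool (p = 1) * snd (SR_commutator x y) $ (p+q+1)"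
    and "2 \<le> p \<Longrightarrow> snd (SR_commutator x y) $ (p+q+3) =
           snd (x \<otimes>\<^bsub>SR\<^esub> y) $ (p+q+3) - snd (y \<otimes>\<^bsub>SR\<^esub> x) $ (p+q+3)
           - of_nat (p+q+1) * of_bool (p = 2) * snd (SR_commutator x y) $ (p+q+1)"
proof -
  have "x \<in> carrier SR" "y \<in> carrier SR" "p + q \<ge> 1"
    using p pq by (simp_all add: x_def y_def)
  note C = SR_commutator_nth[OF this(1,2) SR_lagrange_mult_agree[folded x_def y_def] this(3)]
  have "snd (y \<otimes>\<^bsub>SR\<^esub> x) $ 2 = of_bool (p = 1)"
    using p pq by (auto simp: x_def y_def snd_SR_lagrange_qp_nth nat_dvd_less_iff)
  moreover have "snd (y \<otimes>\<^bsub>SR\<^esub> x) $ 3 = of_bool (p = 2)" if "2 \<le> p"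
    using that pq by (auto simp: x_def y_def snd_SR_lagrange_qp_nth numeral_2_eq_2 numeral_3_eq_3)
  ultimately show "SR_agree (p+q) (SR_commutator x y) \<one>\<^bsub>SR\<^esub>"
    and "snd (SR_commutator x y) $ (p+q+1) = snd (x \<otimes>\<^bsub>SR\<^esub> y) $ (p+q+1) - snd (y \<otimes>\<^bsub>SR\<^esub> x) $ (p+q+1)"
    and "snd (SR_commutator x y) $ (p+q+2) = snd (x \<otimes>\<^bsub>SR\<^esub> y) $ (p+q+2) - snd (y \<otimes>\<^bsub>SR\<^esub> x) $ (p+q+2)
           - of_nat (p+q+1) * of_bool (p = 1) * snd (SR_commutator x y) $ (p+q+1)"
    and "2 \<le> p \<Longrightarrow> snd (SR_commutator x y) $ (p+q+3) =
           snd (x \<otimes>\<^bsub>SR\<^esub> y) $ (p+q+3) - snd (y \<otimes>\<^bsub>SR\<^esub> x) $ (p+q+3)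
           - of_nat (p+q+1) * of_bool (p = 2) * snd (SR_commutator x y) $ (p+q+1)"
    using C by (simp_all add: algebra_simps)
qed

lemma SR_commutator_lagrange:
  defines "w \<equiv> SR_commutator (SR_lagrange p 1) (SR_lagrange q c)"
  shows "lagrange_comm (p+q) w"
    and "snd w $ (p+q+1) = (int q - int p) * c"
    and "snd w $ (p+q+2) = of_bool (p = 1) * c * (int ((q+1) choose 2) - (int q + 2) * (int q - 1))"
    and "2 \<le> p \<Longrightarrow>
      snd w $ (p+q+3) = of_bool (p = 2) * c * (int ((q+1) choose 2) - (int q + 3) * (int q - 2))"
proof -
  note C = SR_commutator_lagrange_nth[folded w_def]
  note pq_nth = snd_SR_lagrange_pq_nth and qp_nth = snd_SR_lagrange_qp_nth
  have "fst (SR_lagrange p 1) = 1" "fst (SR_lagrange q c) = 1"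
    by (simp_all add: SR_lagrange_def)
  with C(1) p pq show "lagrange_comm (p+q) w"
    unfolding w_def by (intro lagrange_comm_commutator) simp_all
  show wN: "snd w $ (p+q+1) = (int q - int p) * c"
    using C(2) p pq by (simp add: pq_nth qp_nth algebra_simps)
  have "p dvd p + 1 \<longleftrightarrow> p = 1" "\<not> q dvd q + 1"
    using p pq by (simp_all only: dvd_add_triv_left_iff) auto
  then have "snd (SR_lagrange p 1 \<otimes>\<^bsub>SR\<^esub> SR_lagrange q c) $ (p+q+2) =
      of_bool (p = 1) * c * int ((q+1) choose 2)"
    and "snd (SR_lagrange q c \<otimes>\<^bsub>SR\<^esub> SR_lagrange p 1) $ (p+q+2) = 0"
    using p pq by (auto simp: pq_nth qp_nth numeral_2_eq_2)
  then show wN1: "snd w $ (p+q+2) =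
      of_bool (p = 1) * c * (int ((q+1) choose 2) - (int q + 2) * (int q - 1))"
    using C(3) unfolding wN by (auto simp: algebra_simps)
  assume p2: "2 \<le> p"
  have d: "p dvd p + 2 \<longleftrightarrow> p = 2" "\<not> q dvd q + 2"
    using p2 pq nat_dvd_less_iff[of 2 q] by (simp_all only: dvd_add_triv_left_iff) (auto dest: dvd_imp_le)
  have "snd (SR_lagrange p 1 \<otimes>\<^bsub>SR\<^esub> SR_lagrange q c) $ (p+q+3) =
      of_bool (p = 2) * c * int ((q+1) choose 2)"
    unfolding pq_nth using p2 pq d(1) by (cases "p = 2") simp_all
  moreover have "snd (SR_lagrange q c \<otimes>\<^bsub>SR\<^esub> SR_lagrange p 1) $ (p+q+3) = 0"
    using p2 pq d(2) by (auto simp: qp_nth numeral_2_eq_2 numeral_3_eq_3)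
  ultimately show "snd w $ (p+q+3) =
      of_bool (p = 2) * c * (int ((q+1) choose 2) - (int q + 3) * (int q - 2))"
    using C(4) p2 unfolding wN by (auto simp: algebra_simps)
qed

end

lemma lagrange_comm_even_position:
  assumes "odd n" "n \<ge> 3"
  obtains w where "lagrange_comm n w" "snd w $ (n+1) = c" "n \<ge> 5 \<Longrightarrow> snd w $ (n+2) = 0"
proof -
  define m where "m = n div 2"
  have m: "1 \<le> m" "m < m + 1" "n \<ge> 5 \<Longrightarrow> m \<noteq> 1"
    using assms unfolding m_def by presburger+
  have "m + (m+1) = n"
    using assms(1) unfolding m_def by presburger
  note L = SR_commutator_lagrange[OF m(1,2), of c, unfolded this]
  from L(1-3) m(3) show thesis
    by (intro that) simp_all
qed

lemma lagrange_comm_odd_position: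
  assumes "even n" "n \<ge> 4"
  obtains w where "lagrange_comm n w" "snd w $ (n+1) = 2 * c"
    "n \<ge> 8 \<Longrightarrow> snd w $ (n+2) = 0" "n \<ge> 8 \<Longrightarrow> snd w $ (n+3) = 0"
proof -
  define m where "m = n div 2 - 1"
  have m: "1 \<le> m" "m < m + 2" "n \<ge> 8 \<Longrightarrow> 3 \<le> m"
    using assms unfolding m_def by presburger+
  have "m + (m+2) = n"
    using assms unfolding m_def by presburger
  note L = SR_commutator_lagrange[OF m(1,2), of c, unfolded this]
  from L m(3) show thesis
    by (intro that) simp_all
qed

lemma odd_choose_two:
  assumes "n mod 4 = 3"
  shows "odd (n choose 2)"
proof -
  define s where "s = n div 4"
  have n: "n = 4 * s + 3"
    using assms unfolding s_def by presburger
  have "n * (n - 1) = n * (2 * s + 1) * 2"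
    by (simp add: n algebra_simps)
  then have "n choose 2 = n * (2 * s + 1)"
    by (simp only: choose_two)
  then show ?thesis
    by (simp add: n)
qed

lemma odd_multiple_adjust:
  fixes x c :: int
  assumes "odd x"
  obtains d where "c * x + 2 * d = c"
proof -
  obtain k where "x = 2 * k + 1"
    using assms oddE by blast
  then show thesis
    by (intro that[of "- c * k"]) (simp add: algebra_simps)
qed

lemma lagrange_comm_mult_Suc:
  assumes "lagrange_comm n u" "lagrange_comm n v" "n \<ge> 3" "snd u $ (n+1) + snd v $ (n+1) = 0"
  shows "lagrange_comm (n+1) (u \<otimes>\<^bsub>SR\<^esub> v)"
  using assms lagrange_comm_mult_nth[OF assms(1-3)] by (intro lagrange_comm_Suc) simp_all

(* At an odd position the leading coefficient (q - p) c of a Lagrange commutator is even.  An odd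
   coefficient is read off the next-order term of the commutator with p = 1 (p = 2 for the other
   residue mod 4), after cancelling the terms below it by even-position elements; the remaining
   even discrepancy is corrected by an odd-position element. *)
lemma lagrange_comm_position_1_mod_4:
  assumes "n mod 4 = 0" "n \<ge> 8"
  obtains w where "lagrange_comm n w" "snd w $ (n+1) = c"
proof -
  define q where "q = n - 2"
  have n: "n = q + 2"
    using assms(2) by (simp add: q_def)
  have "(q+1) mod 4 = 3 \<and> even q \<and> q \<ge> 6"
    using assms n by presburger
  then have q: "(q+1) mod 4 = 3" "even q" "1 < q" "q \<ge> 6"
    by simp_all
  define a where "a = int ((q+1) choose 2) - (int q + 2) * (int q - 1)"
  have "odd a"
    using q odd_choose_two[of "q+1"] by (simp add: a_def)
  then obtain d where d: "c * a + 2 * d = c"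
    by (rule odd_multiple_adjust)
  define w1 where "w1 = SR_commutator (SR_lagrange 1 1) (SR_lagrange q c)"
  have "1 + q = q + 1"
    by simp
  note L = SR_commutator_lagrange[OF order_refl q(3), of c, folded w1_def, unfolded this]
  obtain w2 where w2: "lagrange_comm (q+1) w2" "snd w2 $ (q+1+1) = - ((int q - 1) * c)"
    "q+1 \<ge> 5 \<Longrightarrow> snd w2 $ (q+1+2) = 0"
    by (rule lagrange_comm_even_position[of "q+1"]) (use q in auto)
  obtain w3 where w3: "lagrange_comm (q+2) w3" "snd w3 $ (q+2+1) = 2 * d"
    by (rule lagrange_comm_odd_position[of "q+2"]) (use q in auto)
  have u: "lagrange_comm (q+2) (w1 \<otimes>\<^bsub>SR\<^esub> w2)"
    using lagrange_comm_mult_Suc[OF L(1) w2(1)] L(2) w2(2) q(4) by simp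
  have "snd (w1 \<otimes>\<^bsub>SR\<^esub> w2) $ (q+3) = c * a"
    using lagrange_comm_mult_nth(2)[OF L(1) w2(1)] L(3) w2(3) q(4) by (simp add: a_def numeral_3_eq_3)
  then have "snd (w1 \<otimes>\<^bsub>SR\<^esub> w2 \<otimes>\<^bsub>SR\<^esub> w3) $ (q+3) = c"
    using lagrange_comm_mult_nth(2)[OF u w3(1)] w3(2) d q(4) by (simp add: numeral_3_eq_3)
  moreover have "lagrange_comm (q+2) (w1 \<otimes>\<^bsub>SR\<^esub> w2 \<otimes>\<^bsub>SR\<^esub> w3)"
    using lagrange_comm_mult_nth(1)[OF u w3(1)] q(4) by simp
  ultimately show thesis
    using that[of "w1 \<otimes>\<^bsub>SR\<^esub> w2 \<otimes>\<^bsub>SR\<^esub> w3"] unfolding n by (simp add: numeral_3_eq_3)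
qed

lemma lagrange_comm_position_3_mod_4:
  assumes "n mod 4 = 2" "n \<ge> 10"
  obtains w where "lagrange_comm n w" "snd w $ (n+1) = c"
proof -
  define q where "q = n - 4"
  have n: "n = q + 4"
    using assms(2) by (simp add: q_def)
  have "(q+1) mod 4 = 3 \<and> even q \<and> q \<ge> 6"
    using assms n by presburger
  then have q: "(q+1) mod 4 = 3" "even q" "2 < q" "q \<ge> 6"
    by simp_all
  define b where "b = int ((q+1) choose 2) - (int q + 3) * (int q - 2)"
  have "odd b"
    using q odd_choose_two[of "q+1"] by (simp add: b_def)
  then obtain d where d: "c * b + 2 * d = c"
    by (rule odd_multiple_adjust)
  define w1 where "w1 = SR_commutator (SR_lagrange 2 1) (SR_lagrange q c)"
  have "2 + q = q + 2"
    by simp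
  note L = SR_commutator_lagrange[OF one_le_numeral q(3), of c, folded w1_def, unfolded this]
  obtain k where "q = 2 * k"
    using q(2) by (rule evenE)
  then have k: "int q = 2 * int k"
    by simp
  obtain w2 where w2: "lagrange_comm (q+2) w2" "snd w2 $ (q+2+1) = 2 * (- (int k - 1) * c)"
    "q+2 \<ge> 8 \<Longrightarrow> snd w2 $ (q+2+2) = 0" "q+2 \<ge> 8 \<Longrightarrow> snd w2 $ (q+2+3) = 0"
    by (rule lagrange_comm_odd_position[of "q+2"]) (use q in auto)
  obtain w3 where w3: "lagrange_comm (q+4) w3" "snd w3 $ (q+4+1) = 2 * d"
    by (rule lagrange_comm_odd_position[of "q+4"]) (use q in auto)
  have "lagrange_comm (q+3) (w1 \<otimes>\<^bsub>SR\<^esub> w2)"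
    using lagrange_comm_mult_Suc[OF L(1) w2(1)] L(2) w2(2) k q(4) by (simp add: algebra_simps numeral_3_eq_3)
  moreover have "snd (w1 \<otimes>\<^bsub>SR\<^esub> w2) $ (q+4) = 0" "snd (w1 \<otimes>\<^bsub>SR\<^esub> w2) $ (q+5) = c * b"
    using lagrange_comm_mult_nth(2)[OF L(1) w2(1)] L(3,4) w2(3,4) q(4) by (simp_all add: b_def eval_nat_numeral)
  ultimately have u: "lagrange_comm (q+4) (w1 \<otimes>\<^bsub>SR\<^esub> w2)"
    using lagrange_comm_Suc[of "q+3"] by (simp add: add.commute eval_nat_numeral)
  have "snd (w1 \<otimes>\<^bsub>SR\<^esub> w2 \<otimes>\<^bsub>SR\<^esub> w3) $ (q+5) = c"
    using lagrange_comm_mult_nth(2)[OF u w3(1)] w3(2) d \<open>snd (w1 \<otimes>\<^bsub>SR\<^esub> w2) $ (q+5) = c * b\<close> q(4)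
    by (simp add: eval_nat_numeral)
  moreover have "lagrange_comm (q+4) (w1 \<otimes>\<^bsub>SR\<^esub> w2 \<otimes>\<^bsub>SR\<^esub> w3)"
    using lagrange_comm_mult_nth(1)[OF u w3(1)] q(4) by (simp add: eval_nat_numeral)
  ultimately show thesis
    using that[of "w1 \<otimes>\<^bsub>SR\<^esub> w2 \<otimes>\<^bsub>SR\<^esub> w3"] unfolding n by (simp add: eval_nat_numeral)
qed

lemma lagrange_comm_realizes:
  assumes "n \<ge> 1" and "n \<ge> 3 \<or> c = 0" and "n \<in> {4, 6} \<Longrightarrow> even c"
  obtains w where "lagrange_comm n w" "snd w $ (n+1) = c"
proof -
  have "c = 0 \<or> (odd n \<and> n \<ge> 3) \<or> (n = 4 \<or> n = 6) \<or> (n mod 4 = 0 \<and> n \<ge> 8) \<or> (n mod 4 = 2 \<and> n \<ge> 10)"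
    using assms(2) by presburger
  then consider "c = 0" | "odd n" "n \<ge> 3" | "n = 4 \<or> n = 6" | "n mod 4 = 0" "n \<ge> 8" | "n mod 4 = 2" "n \<ge> 10"
    by argo
  then show thesis
  proof cases
    case 1
    then show thesis
      using that[OF lagrange_comm_one] assms(1) by (simp add: SR_one_eq)
  next
    case 2
    then show thesis
      using that lagrange_comm_even_position by blast
  next
    case 3
    then obtain d where "c = 2 * d"
      using assms(3) by blast
    moreover have "even n" "n \<ge> 4"
      using 3 by auto
    ultimately show thesis
      using that lagrange_comm_odd_position[of n d] by metis
  next
    case 4
    then show thesis
      using that by (rule lagrange_comm_position_1_mod_4)
  next
    case 5
    then show thesis
      using that by (rule lagrange_comm_position_3_mod_4)
  qed
qed

lemma SR_comm_realizes_fst: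
  assumes n: "n \<ge> 1"
  obtains w where "w \<in> SR_comm" "SR_agree n w \<one>\<^bsub>SR\<^esub>" "fst w $ (n+1) = c" "snd w $ (n+1) = 0"
proof -
  define F :: "int fps" where "F = fps_X + fps_X ^ (n+1)"
  define x y where "x = SR_appell (- c)" and "y = SR_lagrange n 1"
  have xy: "x \<in> carrier SR" "y \<in> carrier SR"
    using n by (simp_all add: x_def y_def)
  have F0: "F $ 0 = 0"
    by (simp add: F_def)
  have "x \<otimes>\<^bsub>SR\<^esub> y = (1 + fps_const (- c) * fps_X, F)"
    by (simp add: x_def y_def SR_appell_def SR_lagrange_def SR_mult_eq F_def)
  moreover have "y \<otimes>\<^bsub>SR\<^esub> x = (1 + fps_const (- c) * F, F)"
    using F0 by (simp add: x_def y_def SR_appell_def SR_lagrange_def SR_mult_eq F_def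
        fps_compose_add_distrib fps_compose_mult_distrib)
  moreover have "F $ i = of_bool (i = 1) + of_bool (i = n+1)" for i
    using n by (auto simp: F_def)
  ultimately have "SR_agree n (y \<otimes>\<^bsub>SR\<^esub> x) (x \<otimes>\<^bsub>SR\<^esub> y)"
    and "fst (x \<otimes>\<^bsub>SR\<^esub> y) $ (n+1) - fst (y \<otimes>\<^bsub>SR\<^esub> x) $ (n+1) = c"
    and "snd (x \<otimes>\<^bsub>SR\<^esub> y) = snd (y \<otimes>\<^bsub>SR\<^esub> x)"
    using n by (auto simp: SR_agree_def fps_agree_def)
  with SR_commutator_nth[OF xy this(1) n] show thesis
    by (intro that[of "SR_commutator x y"]) (simp_all add: SR_commutator_in_SR_comm xy)
qed

section \<open>The abelianization map\<close>

lemma fps_compose_nth_2: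
  fixes F H :: "'a::comm_ring_1 fps"
  assumes "F $ 0 = 0" "F $ 1 = 1" "H $ 0 = 0" "H $ 1 = 1"
  shows "(H oo F) $ 2 = F $ 2 + H $ 2"
  using assms by (simp add: fps_compose_nth fps_mult_nth numeral_eq_Suc algebra_simps)

lemma fps_compose_nth_3:
  fixes F H :: "'a::comm_ring_1 fps"
  assumes "F $ 0 = 0" "F $ 1 = 1" "H $ 0 = 0" "H $ 1 = 1"
  shows "(H oo F) $ 3 = 2 * F $ 2 * H $ 2 + F $ 3 + H $ 3"
  using assms by (simp add: fps_compose_nth fps_mult_nth numeral_eq_Suc algebra_simps)

lemma fps_compose_nth_4:
  fixes F H :: "'a::comm_ring_1 fps"
  assumes "F $ 0 = 0" "F $ 1 = 1" "H $ 0 = 0" "H $ 1 = 1"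
  shows "(H oo F) $ 4 = 3 * F $ 2 * H $ 3 + (F $ 2)\<^sup>2 * H $ 2 + 2 * F $ 3 * H $ 2 + F $ 4 + H $ 4"
  using assms
  by (simp add: fps_compose_nth fps_mult_nth numeral_eq_Suc algebra_simps power2_eq_square)

lemma fps_compose_nth_5:
  fixes F H :: "'a::comm_ring_1 fps"
  assumes "F $ 0 = 0" "F $ 1 = 1" "H $ 0 = 0" "H $ 1 = 1"
  shows "(H oo F) $ 5 = 2 * F $ 2 * F $ 3 * H $ 2 + 4 * F $ 2 * H $ 4 + 3 * (F $ 2)\<^sup>2 * H $ 3
      + 3 * F $ 3 * H $ 3 + 2 * F $ 4 * H $ 2 + F $ 5 + H $ 5"
  using assms
  by (simp add: fps_compose_nth fps_mult_nth numeral_eq_Suc algebra_simps power2_eq_square)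

lemma fps_compose_nth_7:
  fixes F H :: "'a::comm_ring_1 fps"
  assumes "F $ 0 = 0" "F $ 1 = 1" "H $ 0 = 0" "H $ 1 = 1"
  shows "(H oo F) $ 7 = 12 * F $ 2 * F $ 3 * H $ 4 + 6 * F $ 2 * F $ 4 * H $ 3
      + 2 * F $ 2 * F $ 5 * H $ 2 + 6 * F $ 2 * H $ 6 + 3 * (F $ 2)\<^sup>2 * F $ 3 * H $ 3
      + 10 * (F $ 2)\<^sup>2 * H $ 5 + 4 * (F $ 2) ^ 3 * H $ 4 + 2 * F $ 3 * F $ 4 * H $ 2
      + 5 * F $ 3 * H $ 5 + 3 * (F $ 3)\<^sup>2 * H $ 3 + 4 * F $ 4 * H $ 4 + 3 * F $ 5 * H $ 3
      + 2 * F $ 6 * H $ 2 + F $ 7 + H $ 7"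
  using assms
  by (simp add: fps_compose_nth fps_mult_nth numeral_eq_Suc algebra_simps power2_eq_square
      power3_eq_cube)

definition int_choose_2 :: "int \<Rightarrow> int" where
  "int_choose_2 x = x * (x - 1) div 2"

lemma int_choose_2_add: "int_choose_2 (x + y) = int_choose_2 x + int_choose_2 y + x * y"
proof -
  have "even (x * (x - 1))" "even (y * (y - 1))"
    by simp_all
  moreover have "(x + y) * (x + y - 1) = x * (x - 1) + y * (y - 1) + 2 * (x * y)"
    by (simp add: algebra_simps)
  ultimately show ?thesis
    by (auto simp: int_choose_2_def elim!: evenE)
qed

lemma mod_2_add_eqI: "even ((a::int) - b - c) \<Longrightarrow> a mod 2 = (b mod 2 + c mod 2) mod 2"
  by presburger

(* Modulo 2, (H oo F) $ 4 + (H oo F) $ 5 and int_choose_2 ((H oo F) $ 3) both exceed the sum of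
   the corresponding terms for F and H by the cross term F$2 H$2 + F$3 H$3, so the two together
   are additive. *)
definition parity45 :: "int fps \<Rightarrow> int" where
  "parity45 f = (f $ 4 + f $ 5 + int_choose_2 (f $ 3)) mod 2"

definition parity57 :: "int fps \<Rightarrow> int" where
  "parity57 f = (f $ 5 + f $ 7 + f $ 3 * f $ 5) mod 2"

lemma parity45_compose:
  assumes "F $ 0 = 0" "F $ 1 = 1" "H $ 0 = 0" "H $ 1 = 1"
  shows "parity45 (H oo F) = (parity45 F + parity45 H) mod 2"
proof -
  have "int_choose_2 ((H oo F) $ 3) =
      int_choose_2 (F $ 3) + int_choose_2 (H $ 3) + F $ 3 * H $ 3
      + F $ 2 * H $ 2 * (2 * F $ 2 * H $ 2 - 1) + (F $ 3 + H $ 3) * (2 * F $ 2 * H $ 2)"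
    unfolding fps_compose_nth_3[OF assms] int_choose_2_add
    by (simp add: int_choose_2_def algebra_simps)
  then show ?thesis
    unfolding parity45_def fps_compose_nth_4[OF assms] fps_compose_nth_5[OF assms]
    by (intro mod_2_add_eqI) auto
qed

lemma parity57_compose:
  assumes "F $ 0 = 0" "F $ 1 = 1" "H $ 0 = 0" "H $ 1 = 1"
  shows "parity57 (H oo F) = (parity57 F + parity57 H) mod 2"
  unfolding parity57_def fps_compose_nth_3[OF assms] fps_compose_nth_5[OF assms]
    fps_compose_nth_7[OF assms]
  by (intro mod_2_add_eqI) auto

definition SR_abel :: "int fps \<times> int fps \<Rightarrow> int \<times> int \<times> int \<times> int \<times> int" where
  "SR_abel x =
     (fst x $ 1, snd x $ 2, snd x $ 3 - (snd x $ 2)\<^sup>2, parity45 (snd x), parity57 (snd x))"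

abbreviation SR_abel_target :: "(int \<times> int \<times> int \<times> int \<times> int) monoid" where
  "SR_abel_target \<equiv> integer_group \<times>\<times> integer_group \<times>\<times> integer_group \<times>\<times>
                      integer_mod_group 2 \<times>\<times> integer_mod_group 2"

lemma DirProd_comm_group:
  assumes "comm_group G" "comm_group H"
  shows "comm_group (G \<times>\<times> H)"
proof -
  interpret G: comm_group G by (rule assms(1))
  interpret H: comm_group H by (rule assms(2))
  show ?thesis
  proof (rule group.group_comm_groupI)
    show "group (G \<times>\<times> H)"
      by (simp add: DirProd_group G.is_group H.is_group)
  qed (auto simp: mult_DirProd' G.m_comm H.m_comm)
qed

lemma comm_group_SR_abel_target: "comm_group SR_abel_target"
  by (intro DirProd_comm_group abelian_integer_group abelian_integer_mod_group)

lemma SR_abel_hom: "SR_abel \<in> hom SR SR_abel_target"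
proof (rule homI)
  fix x assume "x \<in> carrier SR"
  show "SR_abel x \<in> carrier SR_abel_target"
    by (simp add: SR_abel_def carrier_integer_mod_group integer_group_def parity45_def parity57_def)
next
  fix x y assume x: "x \<in> carrier SR" and y: "y \<in> carrier SR"
  then have A: "snd x $ 0 = 0" "snd x $ 1 = 1" "snd y $ 0 = 0" "snd y $ 1 = 1"
    by (auto simp: carrier_SR_iff)
  have "fst (x \<otimes>\<^bsub>SR\<^esub> y) $ 1 = fst x $ 1 + fst y $ 1"
    using x y by (simp add: SR_mult_eq fps_mult_nth carrier_SR_iff fps_compose_nth)
  moreover have "snd (x \<otimes>\<^bsub>SR\<^esub> y) = snd y oo snd x"
    by (simp add: SR_mult_eq)
  ultimately show "SR_abel (x \<otimes>\<^bsub>SR\<^esub> y) = SR_abel x \<otimes>\<^bsub>SR_abel_target\<^esub> SR_abel y"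
    unfolding SR_abel_def
    using fps_compose_nth_2[OF A] fps_compose_nth_3[OF A] parity45_compose[OF A] parity57_compose[OF A]
    by (simp add: integer_group_def power2_eq_square algebra_simps)
qed

interpretation SR_abel: group_hom SR SR_abel_target SR_abel
  by (simp add: group_hom_def group_hom_axioms_def group_SR SR_abel_hom DirProd_group)

lemma SR_abel_kernel_iff:
  "x \<in> kernel SR SR_abel_target SR_abel \<longleftrightarrow> x \<in> carrier SR \<and> SR_abel x = (0, 0, 0, 0, 0)"
  by (simp add: kernel_def integer_group_def)

lemma SR_comm_subset_SR_abel_kernel: "SR_comm \<subseteq> kernel SR SR_abel_target SR_abel"
  using SR_abel.derived_subset_kernel[OF comm_group_SR_abel_target] by (simp add: SR_comm_eq_derived)

lemma SR_abel_agree: "SR_agree 7 x y \<Longrightarrow> SR_abel x = SR_abel y"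
  by (simp add: SR_agree_def fps_agree_def SR_abel_def parity45_def parity57_def)

lemma SR_abel_eq_0_iff:
  "SR_abel (g, f) = (0, 0, 0, 0, 0) \<longleftrightarrow>
     g $ 1 = 0 \<and> f $ 2 = 0 \<and> f $ 3 = 0 \<and> f $ 4 mod 2 = f $ 5 mod 2 \<and> f $ 5 mod 2 = f $ 7 mod 2"
proof -
  have "(a + b) mod 2 = 0 \<longleftrightarrow> a mod 2 = b mod 2" for a b :: int
    by presburger
  then show ?thesis
    by (auto simp: SR_abel_def parity45_def parity57_def int_choose_2_def)
qed

lemma SR_abel_surj: "SR_abel ` carrier SR = carrier SR_abel_target"
proof
  show "SR_abel ` carrier SR \<subseteq> carrier SR_abel_target"
    using SR_abel.hom_closed by blast
  show "carrier SR_abel_target \<subseteq> SR_abel ` carrier SR"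
  proof
    fix t assume "t \<in> carrier SR_abel_target"
    then obtain a b c d e where t: "t = (a, b, c, d, e)" "0 \<le> d" "d < 2" "0 \<le> e" "e < 2"
      by (auto simp: carrier_integer_mod_group)
    define g :: "int fps" where "g = 1 + fps_const a * fps_X"
    define f :: "int fps" where "f = fps_X + fps_const b * fps_X ^ 2 + fps_const (c + b\<^sup>2) * fps_X ^ 3
       + fps_const (d - int_choose_2 (c + b\<^sup>2)) * fps_X ^ 4 + fps_const e * fps_X ^ 7"
    have "(g, f) \<in> carrier SR"
      by (simp add: carrier_SR_iff g_def f_def)
    moreover have "SR_abel (g, f) = t"
      using t by (auto simp: SR_abel_def parity45_def parity57_def g_def f_def)
    ultimately show "t \<in> SR_abel ` carrier SR"
      by force
  qed
qed

section \<open>The kernel is the closed commutator subgroup\<close>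

lemma SR_abel_kernel_snd_nth:
  assumes z: "z \<in> kernel SR SR_abel_target SR_abel" and z1: "SR_agree n z \<one>\<^bsub>SR\<^esub>" and n: "n \<ge> 1"
  shows "n \<ge> 3 \<or> snd z $ (n+1) = 0" and "n \<in> {4, 6} \<Longrightarrow> even (snd z $ (n+1))"
proof -
  have f2: "snd z $ 2 = 0" and f3: "snd z $ 3 = 0"
    and p45: "parity45 (snd z) = 0" and p57: "parity57 (snd z) = 0"
    using z by (auto simp: SR_abel_kernel_iff SR_abel_def)
  have low: "snd z $ i = 0" if "2 \<le> i" "i \<le> n" for i
    using z1 that by (auto simp: SR_agree_def fps_agree_def SR_one_eq)
  show "n \<ge> 3 \<or> snd z $ (n+1) = 0"
  proof (cases "n \<ge> 3")
    case False
    with n have "n + 1 = 2 \<or> n + 1 = 3"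
      by linarith
    with f2 f3 show ?thesis
      by metis
  qed simp
  show "even (snd z $ (n+1))" if "n \<in> {4, 6}"
    using that p45 p57 f3 low[of 4] low[of 5]
    by (auto simp: parity45_def parity57_def int_choose_2_def even_iff_mod_2_eq_zero)
qed

lemma SR_abel_kernel_approx_Suc:
  assumes z: "z \<in> kernel SR SR_abel_target SR_abel" and z1: "SR_agree n z \<one>\<^bsub>SR\<^esub>"
  obtains w where "w \<in> SR_comm" "SR_agree (Suc n) z w"
proof (cases "n = 0")
  case True
  have "z \<in> carrier SR" "fst z $ 1 = 0"
    using z by (simp_all add: SR_abel_kernel_iff SR_abel_def)
  then have "SR_agree (Suc n) z \<one>\<^bsub>SR\<^esub>"
    using True by (auto simp: SR_agree_def fps_agree_def carrier_SR_iff SR_one_eq le_Suc_eq)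
  then show thesis
    using that subgroup.one_closed[OF SR_comm_subgroup] by blast
next
  case False
  then have n: "n \<ge> 1"
    by simp
  note c = SR_abel_kernel_snd_nth[OF z z1 n]
  obtain wf where wf: "lagrange_comm n wf" "snd wf $ (n+1) = snd z $ (n+1)"
    by (rule lagrange_comm_realizes[OF n c])
  obtain wg where wg: "wg \<in> SR_comm" "SR_agree n wg \<one>\<^bsub>SR\<^esub>" "fst wg $ (n+1) = fst z $ (n+1)"
    "snd wg $ (n+1) = 0"
    by (rule SR_comm_realizes_fst[OF n])
  have wgc: "wg \<in> carrier SR"
    using wg(1) by (rule subgroup.mem_carrier[OF SR_comm_subgroup])
  have wfc: "wf \<in> carrier SR"
    using wf(1) by (rule lagrange_comm_carrier)
  have wf1: "SR_agree n wf \<one>\<^bsub>SR\<^esub>"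
    using wf(1) by (simp add: lagrange_comm_def)
  note M = SR_mult_near_one_nth[OF wgc wfc wf1 n]
  have "SR_agree (Suc n) z (wg \<otimes>\<^bsub>SR\<^esub> wf)"
    using SR_agree_trans[OF z1 SR_agree_sym[OF SR_agree_trans[OF M(1) wg(2)]]]
      M(2,3) wg(3,4) wf
    by (simp add: SR_agree_Suc_iff lagrange_comm_def)
  moreover have "wg \<otimes>\<^bsub>SR\<^esub> wf \<in> SR_comm"
    using wg(1) wf(1) subgroup.m_closed[OF SR_comm_subgroup] by (simp add: lagrange_comm_def)
  ultimately show thesis
    by (rule that[rotated])
qed

lemma SR_abel_kernel_approx:
  assumes x: "x \<in> kernel SR SR_abel_target SR_abel"
  shows "\<exists>y\<in>SR_comm. SR_agree n x y"
proof (induction n)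
  case 0
  have "x \<in> carrier SR"
    using x by (simp add: SR_abel_kernel_iff)
  then have "SR_agree 0 x \<one>\<^bsub>SR\<^esub>"
    by (simp add: SR_agree_def fps_agree_def SR_one_eq carrier_SR_iff)
  then show ?case
    using subgroup.one_closed[OF SR_comm_subgroup] by blast
next
  case (Suc n)
  then obtain y where y: "y \<in> SR_comm" "SR_agree n x y"
    by blast
  have xc: "x \<in> carrier SR" and yc: "y \<in> carrier SR"
    using x y(1) SR_comm_subgroup subgroup.mem_carrier by (auto simp: SR_abel_kernel_iff)
  define z where "z = inv\<^bsub>SR\<^esub> y \<otimes>\<^bsub>SR\<^esub> x"
  have "z \<in> kernel SR SR_abel_target SR_abel"
    using x y(1) SR_comm_subset_SR_abel_kernel SR_abel.subgroup_kernel
    by (auto simp: z_def intro: subgroup.m_closed subgroup.m_inv_closed)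
  moreover have "SR_agree n \<one>\<^bsub>SR\<^esub> z"
    using SR_agree_mult[OF SR_agree_refl SR_agree_sym[OF y(2)], of "inv\<^bsub>SR\<^esub> y"] yc
    by (simp add: z_def)
  then have "SR_agree n z \<one>\<^bsub>SR\<^esub>"
    by (rule SR_agree_sym)
  ultimately obtain w where w: "w \<in> SR_comm" "SR_agree (Suc n) z w"
    by (rule SR_abel_kernel_approx_Suc)
  have "x = y \<otimes>\<^bsub>SR\<^esub> z"
    using xc yc by (simp add: z_def SR.m_assoc[symmetric])
  then have "SR_agree (Suc n) x (y \<otimes>\<^bsub>SR\<^esub> w)"
    using SR_agree_mult[OF SR_agree_refl w(2), of y] by simp
  moreover have "y \<otimes>\<^bsub>SR\<^esub> w \<in> SR_comm"
    using y(1) w(1) subgroup.m_closed[OF SR_comm_subgroup] by blast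
  ultimately show ?case
    by blast
qed

lemma SR_abel_kernel_subset_SR_top_comm: "kernel SR SR_abel_target SR_abel \<subseteq> SR_top_comm"
proof
  fix x assume x: "x \<in> kernel SR SR_abel_target SR_abel"
  define s where "s k = (SOME y. y \<in> SR_comm \<and> SR_agree k x y)" for k
  have s: "s k \<in> SR_comm \<and> SR_agree k x (s k)" for k
    unfolding s_def by (rule someI_ex) (use SR_abel_kernel_approx[OF x, of k] in blast)
  have "tadic_conv s x"
    unfolding tadic_conv_def
  proof
    fix n
    show "\<exists>K. \<forall>k\<ge>K. \<forall>i\<le>n. fst (s k) $ i = fst x $ i \<and> snd (s k) $ i = snd x $ i"
    proof (intro exI[of _ n] allI impI)
      fix k i assume "n \<le> k" "i \<le> n"
      then show "fst (s k) $ i = fst x $ i \<and> snd (s k) $ i = snd x $ i"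
        using s[of k] by (simp add: SR_agree_def fps_agree_def)
    qed
  qed
  then show "x \<in> SR_top_comm"
    unfolding SR_top_comm_def using s by blast
qed

lemma SR_top_comm_subset_SR_abel_kernel: "SR_top_comm \<subseteq> kernel SR SR_abel_target SR_abel"
proof
  fix x assume "x \<in> SR_top_comm"
  then obtain s where s: "\<And>k. s k \<in> SR_comm" and "tadic_conv s x"
    unfolding SR_top_comm_def by blast
  then obtain K where "\<forall>k\<ge>K. \<forall>i\<le>7. fst (s k) $ i = fst x $ i \<and> snd (s k) $ i = snd x $ i"
    unfolding tadic_conv_def by blast
  then have x7: "SR_agree 7 (s K) x"
    by (simp add: SR_agree_def fps_agree_def)
  have sK: "s K \<in> kernel SR SR_abel_target SR_abel"
    using s SR_comm_subset_SR_abel_kernel by blast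
  then have "x \<in> carrier SR"
    using x7 by (auto simp: SR_abel_kernel_iff carrier_SR_iff SR_agree_def fps_agree_def)
  then show "x \<in> kernel SR SR_abel_target SR_abel"
    using sK SR_abel_agree[OF x7] by (simp add: SR_abel_kernel_iff)
qed

lemma SR_abel_kernel_eq_SR_top_comm: "kernel SR SR_abel_target SR_abel = SR_top_comm"
  using SR_abel_kernel_subset_SR_top_comm SR_top_comm_subset_SR_abel_kernel by (rule equalityI)

theorem corollary4:
  fixes g f :: "int fps"
  assumes "(g, f) \<in> carrier SR"
  shows "((g, f) \<in> SR_top_comm \<longleftrightarrow>
            fps_nth g 1 = 0 \<and> fps_nth f 2 = 0 \<and> fps_nth f 3 = 0 \<and>
            fps_nth f 4 mod 2 = fps_nth f 5 mod 2 \<and> fps_nth f 5 mod 2 = fps_nth f 7 mod 2)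
         \<and> (SR Mod SR_top_comm \<cong>
             integer_group \<times>\<times> integer_group \<times>\<times> integer_group \<times>\<times>
             integer_mod_group 2 \<times>\<times> integer_mod_group 2)"
proof
  show "(g, f) \<in> SR_top_comm \<longleftrightarrow>
      g $ 1 = 0 \<and> f $ 2 = 0 \<and> f $ 3 = 0 \<and> f $ 4 mod 2 = f $ 5 mod 2 \<and> f $ 5 mod 2 = f $ 7 mod 2"
    using assms
    by (simp add: SR_abel_kernel_eq_SR_top_comm[symmetric] SR_abel_kernel_iff SR_abel_eq_0_iff)
  show "SR Mod SR_top_comm \<cong> SR_abel_target"
    using SR_abel.FactGroup_iso[OF SR_abel_surj] by (simp add: SR_abel_kernel_eq_SR_top_comm)
qed

end
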